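(* Let $n\ge p$, let $\mathcal X\in\mathrm{St}(n,p,l)$, and let $\hat{\mathcal X}=L(\mathcal X)$. For each $i\in\{1,\dots,l\}$ let $\hat X^{(i)}_\perp\in\mathbb C^{n\times(n-p)}$ be any matrix whose column space is the orthogonal complement (in $\mathbb C^n$) of the column space of $\hat X^{(i)}$, let $\hat{\mathcal X}_\perp$ be the complex tensor with frontal slices $\hat X^{(i)}_\perp$, and let $\mathcal X_\perp=L^{-1}(\hat{\mathcal X}_\perp)$. Then the tangent space of the embedded submanifold $\mathrm{St}(n,p,l)\subset\mathbb R^{n\times p\times l}$ at $\mathcal X$ is $$T_{\mathcal X}\mathrm{St}(n,p,l)=\Big\{\mathcal X*\mathcal W+\mathcal X_\perp*\mathcal B\in\mathbb R^{n\times p\times l}\ :\ \mathcal W\in\mathbb R^{p\times p\times l}\text{ skew-symmetric},\ \mathcal B\in\mathbb R^{(n-p)\times p\times l}\Big\}.$$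
   Context: For $\mathcal A\in\mathbb R^{n\times p\times l}$ (or complex), $A^{(i)}=\mathcal A(:,:,i)$ are its frontal slices. $\operatorname{bcirc}(\mathcal A)$ is the $nl\times pl$ block circulant matrix whose $(i,j)$ block is $A^{(((i-j)\bmod l)+1)}$; $\operatorname{unfold}(\mathcal A)$ stacks $A^{(1)},\dots,A^{(l)}$ vertically, $\operatorname{fold}$ is its inverse. The t-product is $\mathcal A*\mathcal B=\operatorname{fold}(\operatorname{bcirc}(\mathcal A)\operatorname{unfold}(\mathcal B))$ for $\mathcal A$ of size $n\times p\times l$, $\mathcal B$ of size $p\times m\times l$. The transpose $\mathcal A^\top\in\mathbb R^{p\times n\times l}$ has frontal slices $(A^{(1)})^\top,(A^{(l)})^\top,\dots,(A^{(2)})^\top$. The identity tensor $\mathcal I$ has first frontal slice the identity matrix and other slices zero. $\mathrm{St}(n,p,l)=\{\mathcal X\in\mathbb R^{n\times p\times l}:\mathcal X^\top*\mathcal X=\mathcal I\}$ ($n\ge p$), an embedded submanifold of $\mathbb R^{n\times p\times l}$. A tensor $\mathcal W\in\mathbb R^{p\times p\times l}$ is skew-symmetric if $\mathcal W^\top=-\mathcal W$. The discrete Fourier transform $L(\mathcal A)=\hat{\mathcal A}\in\mathbb C^{n\times p\times l}$ has frontal slices $\hat A^{(k)}=\sum_{j=1}^l\omega^{(k-1)(j-1)}A^{(j)}$, $\omega=e^{-2\pi\mathrm i/l}$, and $L^{-1}$ is its inverse; $\mathcal C=\mathcal A*\mathcal B$ iff $\hat C^{(k)}=\hat A^{(k)}\hat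 B^{(k)}$ for all $k$. *)

theory Defs
  imports Complex_Main
begin

text \<open>Third-order tensors are represented as functions of three (0-based) indices.
  A tensor "of size n x p x l" is one that vanishes outside {0..<n} x {0..<p} x {0..<l}.
  Frontal slice number k (0-based) is the matrix (\<lambda>i j. A i j k).\<close>

type_synonym 'a tensor = "nat \<Rightarrow> nat \<Rightarrow> nat \<Rightarrow> 'a"

definition tens :: "nat \<Rightarrow> nat \<Rightarrow> nat \<Rightarrow> ('a::zero) tensor \<Rightarrow> bool" where
  "tens n p l A \<longleftrightarrow> (\<forall>i j k. (n \<le> i \<or> p \<le> j \<or> l \<le> k) \<longrightarrow> A i j k = 0)"

text \<open>t-product A * B = fold (bcirc A * unfold B), A of size n x p x l, B of size p x m x l.
  Slice k of the result is the sum over s of A^((k - s) mod l) B^(s) (0-based).\<close>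
definition tprod :: "nat \<Rightarrow> nat \<Rightarrow> ('a::comm_semiring_0) tensor \<Rightarrow> 'a tensor \<Rightarrow> 'a tensor" where
  "tprod p l A B = (\<lambda>i j k. if k < l then
      (\<Sum>s<l. \<Sum>q<p. A i q ((k + l - s) mod l) * B q j s) else 0)"

definition tadd :: "('a::plus) tensor \<Rightarrow> 'a tensor \<Rightarrow> 'a tensor" where
  "tadd A B = (\<lambda>i j k. A i j k + B i j k)"

text \<open>Tensor transpose: slices (A^(1))^T, (A^(l))^T, ..., (A^(2))^T.\<close>
definition ttrans :: "nat \<Rightarrow> ('a::zero) tensor \<Rightarrow> 'a tensor" where
  "ttrans l A = (\<lambda>i j k. if k < l then A j i ((l - k) mod l) else 0)"

definition tident :: "nat \<Rightarrow> ('a::{zero,one}) tensor" where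
  "tident p = (\<lambda>i j k. if i < p \<and> j = i \<and> k = 0 then 1 else 0)"

definition skew_tensor :: "nat \<Rightarrow> nat \<Rightarrow> real tensor \<Rightarrow> bool" where
  "skew_tensor p l W \<longleftrightarrow> tens p p l W \<and> ttrans l W = (\<lambda>i j k. - W i j k)"

definition Stiefel :: "nat \<Rightarrow> nat \<Rightarrow> nat \<Rightarrow> real tensor set" where
  "Stiefel n p l = {X. tens n p l X \<and> tprod n l (ttrans l X) X = tident p}"

definition omega :: "nat \<Rightarrow> complex" where
  "omega l = cis (- 2 * pi / real l)"

definition DFT :: "nat \<Rightarrow> real tensor \<Rightarrow> complex tensor" where
  "DFT l A = (\<lambda>i j k. if k < l then (\<Sum>s<l. omega l ^ (k * s) * complex_of_real (A i j s)) else 0)"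

definition iDFT :: "nat \<Rightarrow> complex tensor \<Rightarrow> complex tensor" where
  "iDFT l A = (\<lambda>i j k. if k < l then
      (1 / of_nat l) * (\<Sum>s<l. cnj (omega l) ^ (k * s) * A i j s) else 0)"

text \<open>Vectors of C^n are functions nat => complex vanishing from index n on.\<close>
definition colspace :: "nat \<Rightarrow> nat \<Rightarrow> (nat \<Rightarrow> nat \<Rightarrow> complex) \<Rightarrow> (nat \<Rightarrow> complex) set" where
  "colspace n m M = {v. \<exists>c::nat \<Rightarrow> complex.
      v = (\<lambda>i. if i < n then (\<Sum>j<m. M i j * c j) else 0)}"

definition orth_compl :: "nat \<Rightarrow> (nat \<Rightarrow> complex) set \<Rightarrow> (nat \<Rightarrow> complex) set" where
  "orth_compl n S = {v. (\<forall>i\<ge>n. v i = 0) \<and> (\<forall>u\<in>S. (\<Sum>i<n. cnj (u i) * v i) = 0)}"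

text \<open>Tangent space of a subset M of the (finite-dimensional) space of real tensors at X:
  the set of velocities at 0 of smooth (C^infinity, componentwise) curves in M through X.\<close>
definition smooth_on_interval :: "real \<Rightarrow> (real \<Rightarrow> real) \<Rightarrow> bool" where
  "smooth_on_interval e f \<longleftrightarrow> (\<exists>D::nat \<Rightarrow> real \<Rightarrow> real. D 0 = f \<and>
      (\<forall>m. \<forall>t\<in>{-e<..<e}. (D m has_real_derivative D (Suc m) t) (at t)))"

definition tangent_space :: "real tensor set \<Rightarrow> real tensor \<Rightarrow> real tensor set" where
  "tangent_space M X = {V. \<exists>(\<gamma>::real \<Rightarrow> real tensor) e. e > 0 \<and> \<gamma> 0 = X \<and>
      (\<forall>t\<in>{-e<..<e}. \<gamma> t \<in> M) \<and>
      (\<forall>i j k. smooth_on_interval e (\<lambda>t. \<gamma> t i j k) \<and>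
               ((\<lambda>t. \<gamma> t i j k) has_real_derivative V i j k) (at 0))}"

end

theory Submission
  imports Defs "HOL-Library.Function_Algebras"
begin

(*
  The discrete Fourier transform along the third mode turns the t-product into the slicewise
  matrix product and the tensor transpose into the slicewise conjugate transpose.

  Differentiating X(t)^T * X(t) = I along a curve in the Stiefel manifold shows that every
  tangent vector V makes X^T * V skew. Conversely, such a V equals A * X for an explicit skew
  tensor A, and the curve t |-> exp(tA) * X, defined by its power series, stays on the manifold
  (its Gram tensor has derivative zero) and has velocity A * X = V at t = 0.

  Writing W = X^T * V, the tensor V - X * W lies in the kernel of X^T *. In the Fourier domain
  this kernel consists, slice by slice, of the matrices whose columns are orthogonal to those of
  the k-th slice of L(X), i.e. lie in the column space of the k-th slice of L(X_perp). Solving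
  these linear systems slice by slice and taking real parts gives V - X * W = X_perp * B.
*)

section \<open>Roots of unity\<close>

lemma omega_power: "omega l ^ m = cis (- 2 * pi * real m / real l)"
  unfolding omega_def DeMoivre by (simp add: field_simps)

lemma omega_power_self:
  assumes "1 \<le> l"
  shows "omega l ^ l = 1"
  using assms unfolding omega_power by (simp add: complex_eq_iff)

lemma omega_power_eq_1_iff:
  assumes "1 \<le> l"
  shows "omega l ^ m = 1 \<longleftrightarrow> l dvd m"
proof
  assume "omega l ^ m = 1"
  hence "cos (- 2 * pi * real m / real l) = 1"
    unfolding omega_power by (metis cis.sel(1) one_complex.sel(1))
  then obtain z :: int where "- 2 * pi * real m / real l = real_of_int z * 2 * pi"
    using cos_one_2pi_int by metis
  hence "pi * real m = pi * real_of_int (- z * int l)"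
    using assms by (simp add: field_simps)
  hence "real m = real_of_int (- z * int l)"
    using pi_neq_zero mult_cancel_left by blast
  hence "int m = - z * int l"
    by (metis of_int_eq_iff of_int_of_nat_eq)
  thus "l dvd m"
    by (metis dvd_triv_right int_dvd_int_iff)
next
  assume "l dvd m"
  then obtain c where "m = l * c"
    by blast
  thus "omega l ^ m = 1"
    using omega_power_self[OF assms] by (simp add: power_mult)
qed

lemma omega_power_mod:
  assumes "1 \<le> l"
  shows "omega l ^ (m mod l) = omega l ^ m"
proof -
  have "omega l ^ m = omega l ^ (l * (m div l) + m mod l)"
    by simp
  also have "\<dots> = (omega l ^ l) ^ (m div l) * omega l ^ (m mod l)"
    by (simp only: power_add power_mult)
  finally show ?thesis
    using omega_power_self[OF assms] by simp
qed

lemma cnj_omega_power_mult: "cnj (omega l) ^ k * omega l ^ k = 1"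
proof -
  have "cnj (omega l) * omega l = 1"
    unfolding omega_def by (simp add: cis_cnj cis_mult)
  thus ?thesis
    by (metis power_mult_distrib power_one)
qed

lemma omega_power_inj:
  assumes "1 \<le> l" and "u < l" and "k < l" and "omega l ^ u = omega l ^ k"
  shows "u = k"
proof -
  have "u = k" if "u \<le> k" "k < l" "omega l ^ u = omega l ^ k" for u k
  proof -
    have "omega l ^ u * omega l ^ (k - u) = omega l ^ k"
      using that(1) by (simp flip: power_add)
    hence "omega l ^ u * omega l ^ (k - u) = omega l ^ u * 1"
      using that(3) by simp
    moreover have "omega l ^ u \<noteq> 0"
      unfolding omega_def by simp
    ultimately have "omega l ^ (k - u) = 1"
      using mult_left_cancel by blast
    hence "l dvd k - u"
      using omega_power_eq_1_iff[OF assms(1)] by blast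
    thus "u = k"
      using that nat_dvd_not_less[of "k - u" l] by linarith
  qed
  thus ?thesis
    using assms by (metis nat_le_linear)
qed

lemma sum_omega_power_orthogonal:
  assumes l: "1 \<le> l" and "u < l" and "k < l"
  shows "(\<Sum>s<l. (omega l ^ u * cnj (omega l) ^ k) ^ s) = (if u = k then of_nat l else 0)"
proof (cases "u = k")
  case True
  thus ?thesis
    using cnj_omega_power_mult[of l k] by (simp add: mult.commute)
next
  case False
  define z where "z = omega l ^ u * cnj (omega l) ^ k"
  have "omega l ^ l = 1"
    by (rule omega_power_self[OF l])
  moreover from this have "cnj (omega l) ^ l = 1"
    by (metis complex_cnj_one complex_cnj_power)
  moreover have "z ^ l = (omega l ^ l) ^ u * (cnj (omega l) ^ l) ^ k"
    unfolding z_def by (simp add: power_mult_distrib power_mult[symmetric] mult.commute)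
  ultimately have "z ^ l = 1"
    by simp
  moreover have "z \<noteq> 1"
  proof
    assume "z = 1"
    have "omega l ^ u = z * omega l ^ k"
      using cnj_omega_power_mult[of l k] unfolding z_def by (simp add: mult.assoc)
    with \<open>z = 1\<close> have "omega l ^ u = omega l ^ k"
      by simp
    thus False
      using omega_power_inj[OF l \<open>u < l\<close> \<open>k < l\<close>] False by blast
  qed
  ultimately have "(\<Sum>s<l. z ^ s) = 0"
    by (simp add: geometric_sum)
  thus ?thesis
    using False unfolding z_def by simp
qed

section \<open>The discrete Fourier transform\<close>

lemma mod_shift_cancel:
  fixes u s l :: nat
  assumes "u < l" and "s < l"
  shows "((u + s) mod l + l - s) mod l = u" and "((u + l - s) mod l + s) mod l = u"
  using assms by (cases "u + s < l"; cases "u < s"; auto simp: mod_if le_mod_geq)+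

lemma mod_reflect_cancel:
  fixes u l :: nat
  assumes "u < l"
  shows "(l - (l - u) mod l) mod l = u"
  using assms by (cases "u = 0") (auto simp: mod_if)

lemma sum_mod_shift:
  fixes s l :: nat
  assumes "s < l"
  shows "(\<Sum>t<l. f t) = (\<Sum>u<l. f ((u + s) mod l))"
  by (rule sum.reindex_bij_witness[where i = "\<lambda>u. (u + s) mod l" and j = "\<lambda>t. (t + l - s) mod l"])
    (use assms in \<open>auto simp: mod_shift_cancel\<close>)

lemma sum_mod_reflect:
  fixes l :: nat
  shows "(\<Sum>t<l. f t) = (\<Sum>u<l. f ((l - u) mod l))"
  by (rule sum.reindex_bij_witness[where j = "\<lambda>u. (l - u) mod l" and i = "\<lambda>t. (l - t) mod l"])
    (auto simp: mod_reflect_cancel)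

lemma omega_power_reflect:
  assumes l: "1 \<le> l" and "u \<le> l"
  shows "omega l ^ (k * ((l - u) mod l)) = cnj (omega l ^ (k * u))"
proof -
  have "omega l ^ (l - u) = cnj (omega l) ^ u * omega l ^ u * omega l ^ (l - u)"
    using cnj_omega_power_mult[of l u] by simp
  also have "\<dots> = cnj (omega l) ^ u"
    using \<open>u \<le> l\<close> omega_power_self[OF l] by (simp add: mult.assoc flip: power_add)
  finally have "omega l ^ ((l - u) mod l) = cnj (omega l) ^ u"
    using omega_power_mod[OF l] by simp
  thus ?thesis
    by (simp add: mult.commute[of k] power_mult)
qed

lemma sum_omega_power_shift:
  assumes l: "1 \<le> l" and s: "s < l"
  shows "(\<Sum>t<l. omega l ^ (k * t) * g ((t + l - s) mod l))
    = omega l ^ (k * s) * (\<Sum>u<l. omega l ^ (k * u) * g u)"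
proof -
  have "(\<Sum>t<l. omega l ^ (k * t) * g ((t + l - s) mod l))
      = (\<Sum>u<l. omega l ^ (k * ((u + s) mod l)) * g u)"
    by (subst sum_mod_shift[OF s]) (simp add: mod_shift_cancel[OF _ s])
  also have "\<dots> = (\<Sum>u<l. omega l ^ (k * s) * (omega l ^ (k * u) * g u))"
  proof (intro sum.cong refl)
    fix u
    have "omega l ^ (k * ((u + s) mod l)) = (omega l ^ (u + s)) ^ k"
      using omega_power_mod[OF l] by (metis mult.commute power_mult)
    thus "omega l ^ (k * ((u + s) mod l)) * g u = omega l ^ (k * s) * (omega l ^ (k * u) * g u)"
      by (simp add: power_mult[symmetric] power_add[symmetric] algebra_simps)
  qed
  finally show ?thesis
    by (simp add: sum_distrib_left)
qed

definition cDFT :: "nat \<Rightarrow> complex tensor \<Rightarrow> complex tensor" where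
  "cDFT l A = (\<lambda>i j k. if k < l then (\<Sum>s<l. omega l ^ (k * s) * A i j s) else 0)"

definition of_real_tens :: "real tensor \<Rightarrow> complex tensor" where
  "of_real_tens A = (\<lambda>i j k. of_real (A i j k))"

definition vanishes_from :: "nat \<Rightarrow> ('a::zero) tensor \<Rightarrow> bool" where
  "vanishes_from l A \<longleftrightarrow> (\<forall>i j k. l \<le> k \<longrightarrow> A i j k = 0)"

lemma DFT_eq_cDFT: "DFT l A = cDFT l (of_real_tens A)"
  unfolding DFT_def cDFT_def of_real_tens_def ..

lemma iDFT_cDFT:
  assumes l: "1 \<le> l" and A: "vanishes_from l A"
  shows "iDFT l (cDFT l A) = A"
proof (intro ext)
  fix i j k
  show "iDFT l (cDFT l A) i j k = A i j k"
  proof (cases "k < l")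
    case True
    have "(\<Sum>s<l. cnj (omega l) ^ (k * s) * cDFT l A i j s)
        = (\<Sum>s<l. \<Sum>u<l. A i j u * (omega l ^ u * cnj (omega l) ^ k) ^ s)"
      unfolding cDFT_def
      by (simp add: sum_distrib_left power_mult_distrib power_mult[symmetric] mult_ac)
    also have "\<dots> = (\<Sum>u<l. A i j u * (\<Sum>s<l. (omega l ^ u * cnj (omega l) ^ k) ^ s))"
      by (subst sum.swap) (simp add: sum_distrib_left)
    also have "\<dots> = A i j k * of_nat l"
      using True by (simp add: sum_omega_power_orthogonal[OF l _ True] if_distrib cong: if_cong)
    finally show ?thesis
      using True l unfolding iDFT_def by simp
  next
    case False
    thus ?thesis
      using A unfolding iDFT_def vanishes_from_def by simp
  qed
qed

lemma cDFT_iDFT: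
  assumes l: "1 \<le> l" and A: "vanishes_from l A"
  shows "cDFT l (iDFT l A) = A"
proof (intro ext)
  fix i j k
  show "cDFT l (iDFT l A) i j k = A i j k"
  proof (cases "k < l")
    case True
    have "(\<Sum>s<l. omega l ^ (k * s) * iDFT l A i j s)
        = (1 / of_nat l) * (\<Sum>s<l. \<Sum>u<l. A i j u * (omega l ^ k * cnj (omega l) ^ u) ^ s)"
      unfolding iDFT_def
      by (simp add: sum_distrib_left power_mult_distrib power_mult[symmetric] mult_ac)
    also have "(\<Sum>s<l. \<Sum>u<l. A i j u * (omega l ^ k * cnj (omega l) ^ u) ^ s)
        = (\<Sum>u<l. A i j u * (\<Sum>s<l. (omega l ^ k * cnj (omega l) ^ u) ^ s))"
      by (subst sum.swap) (simp add: sum_distrib_left)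
    also have "\<dots> = A i j k * of_nat l"
      using True by (simp add: sum_omega_power_orthogonal[OF l True] if_distrib eq_commute cong: if_cong)
    finally show ?thesis
      using True l unfolding cDFT_def by simp
  next
    case False
    thus ?thesis
      using A unfolding cDFT_def vanishes_from_def by simp
  qed
qed

lemma cDFT_inj:
  assumes "1 \<le> l" and "vanishes_from l A" and "vanishes_from l B" and "cDFT l A = cDFT l B"
  shows "A = B"
  using assms iDFT_cDFT by metis

lemma vanishes_from_of_real_tens: "vanishes_from l A \<Longrightarrow> vanishes_from l (of_real_tens A)"
  unfolding vanishes_from_def of_real_tens_def by simp

lemma of_real_tens_inj: "of_real_tens A = of_real_tens B \<Longrightarrow> A = B"
  unfolding of_real_tens_def by (simp add: fun_eq_iff)

lemma DFT_inj:
  assumes l: "1 \<le> l" and "vanishes_from l A" "vanishes_from l B" "DFT l A = DFT l B"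
  shows "A = B"
  using assms cDFT_inj[OF l] vanishes_from_of_real_tens of_real_tens_inj
  unfolding DFT_eq_cDFT by metis

lemma cDFT_tprod:
  assumes l: "1 \<le> l"
  shows "cDFT l (tprod p l A B) i j k
    = (if k < l then (\<Sum>q<p. cDFT l A i q k * cDFT l B q j k) else 0)"
proof (cases "k < l")
  case True
  have "(\<Sum>t<l. omega l ^ (k * t) * tprod p l A B i j t)
      = (\<Sum>s<l. \<Sum>q<p. B q j s * (\<Sum>t<l. omega l ^ (k * t) * A i q ((t + l - s) mod l)))"
    unfolding tprod_def
    by (simp add: sum_distrib_left sum_distrib_right mult_ac)
      (subst sum.swap, subst (2) sum.swap, rule refl)
  also have "\<dots> = (\<Sum>s<l. \<Sum>q<p. B q j s * (omega l ^ (k * s) * cDFT l A i q k))"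
    using True by (intro sum.cong refl) (simp add: sum_omega_power_shift[OF l] cDFT_def)
  also have "\<dots> = (\<Sum>q<p. cDFT l A i q k * cDFT l B q j k)"
    using True unfolding cDFT_def by (subst sum.swap) (simp add: sum_distrib_left mult_ac)
  finally show ?thesis
    using True unfolding cDFT_def by simp
qed (simp add: cDFT_def)

lemma of_real_tens_tprod: "of_real_tens (tprod p l A B) = tprod p l (of_real_tens A) (of_real_tens B)"
  unfolding of_real_tens_def tprod_def by (simp add: fun_eq_iff)

lemma DFT_tprod:
  assumes "1 \<le> l"
  shows "DFT l (tprod p l A B) i j k
    = (if k < l then (\<Sum>q<p. DFT l A i q k * DFT l B q j k) else 0)"
  unfolding DFT_eq_cDFT of_real_tens_tprod cDFT_tprod[OF assms] ..

lemma DFT_ttrans: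
  assumes l: "1 \<le> l"
  shows "DFT l (ttrans l A) i j k = (if k < l then cnj (DFT l A j i k) else 0)"
proof (cases "k < l")
  case True
  have "(\<Sum>s<l. omega l ^ (k * s) * complex_of_real (A j i ((l - s) mod l)))
      = (\<Sum>u<l. omega l ^ (k * ((l - u) mod l)) * complex_of_real (A j i u))"
    by (subst sum_mod_reflect) (simp add: mod_reflect_cancel)
  also have "\<dots> = (\<Sum>u<l. cnj (omega l ^ (k * u) * complex_of_real (A j i u)))"
    by (intro sum.cong refl) (simp add: omega_power_reflect[OF l])
  finally show ?thesis
    using True unfolding DFT_def ttrans_def by simp
qed (simp add: DFT_def)

lemma vanishes_from_tprod: "vanishes_from l (tprod p l A B)"
  unfolding vanishes_from_def tprod_def by simp

lemma vanishes_from_ttrans: "vanishes_from l (ttrans l A)"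
  unfolding vanishes_from_def ttrans_def by simp

lemma tens_vanishes_from: "tens n p l A \<Longrightarrow> vanishes_from l A"
  unfolding tens_def vanishes_from_def by simp

section \<open>Algebra of the t-product\<close>

lemma tprod_assoc:
  fixes A B C :: "real tensor"
  assumes l: "1 \<le> l"
  shows "tprod m l (tprod p l A B) C = tprod p l A (tprod m l B C)"
proof (rule DFT_inj[OF l vanishes_from_tprod vanishes_from_tprod], intro ext)
  fix i j k
  show "DFT l (tprod m l (tprod p l A B) C) i j k = DFT l (tprod p l A (tprod m l B C)) i j k"
    unfolding DFT_tprod[OF l]
    by (simp add: sum_distrib_left sum_distrib_right mult_ac) (subst sum.swap, simp)
qed

lemma ttrans_tprod:
  fixes A B :: "real tensor"
  assumes l: "1 \<le> l"
  shows "ttrans l (tprod p l A B) = tprod p l (ttrans l B) (ttrans l A)"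
proof (rule DFT_inj[OF l vanishes_from_ttrans vanishes_from_tprod], intro ext)
  fix i j k
  show "DFT l (ttrans l (tprod p l A B)) i j k = DFT l (tprod p l (ttrans l B) (ttrans l A)) i j k"
    by (simp add: DFT_ttrans[OF l] DFT_tprod[OF l] mult.commute)
qed

lemma ttrans_ttrans: "vanishes_from l A \<Longrightarrow> ttrans l (ttrans l A) = A"
  unfolding ttrans_def vanishes_from_def by (intro ext) (auto simp: mod_reflect_cancel)

lemma mod_add_diff_eq_0_iff:
  fixes s k l :: nat
  assumes "s < l" and "k < l"
  shows "(k + l - s) mod l = 0 \<longleftrightarrow> s = k"
  using assms by (cases "s \<le> k") (auto simp: mod_if)

lemma tprod_tident_left:
  fixes A :: "'a::comm_ring_1 tensor"
  assumes l: "1 \<le> l" and A: "tens p m l A"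
  shows "tprod p l (tident p) A = A"
proof (intro ext)
  fix i j k
  show "tprod p l (tident p) A i j k = A i j k"
  proof (cases "k < l \<and> i < p")
    case True
    have "tident p i q ((k + l - s) mod l) * A q j s
        = (if s = k then if q = i then A q j s else 0 else 0)" if "s < l" for s q
      using that True by (auto simp: tident_def mod_add_diff_eq_0_iff)
    hence "tprod p l (tident p) A i j k
        = (\<Sum>s<l. \<Sum>q<p. if s = k then if q = i then A q j s else 0 else 0)"
      unfolding tprod_def using True by (auto intro!: sum.cong)
    thus ?thesis
      using True by (subst (asm) sum.swap) simp
  qed (use A in \<open>auto simp: tprod_def tident_def tens_def\<close>)
qed

lemma tprod_tident_right:
  fixes A :: "'a::comm_ring_1 tensor"
  assumes l: "1 \<le> l" and A: "tens n p l A"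
  shows "tprod p l A (tident p) = A"
proof (intro ext)
  fix i j k
  show "tprod p l A (tident p) i j k = A i j k"
  proof (cases "k < l \<and> j < p")
    case True
    have "A i q ((k + l - s) mod l) * tident p q j s
        = (if s = 0 then if q = j then A i q k else 0 else 0)" if "s < l" for s q
      using that True by (auto simp: tident_def)
    hence "tprod p l A (tident p) i j k
        = (\<Sum>s<l. \<Sum>q<p. if s = 0 then if q = j then A i q k else 0 else 0)"
      unfolding tprod_def using True by (auto intro!: sum.cong)
    thus ?thesis
      using True l by (subst (asm) sum.swap) simp
  qed (use A in \<open>auto simp: tprod_def tident_def tens_def\<close>)
qed

lemma tprod_add_right: "tprod p l A (B + C) = tprod p l A B + tprod p l A C"
  unfolding tprod_def by (simp add: fun_eq_iff sum.distrib distrib_left)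

lemma tprod_diff_left:
  fixes A B C :: "'a::comm_ring tensor"
  shows "tprod p l (A - B) C = tprod p l A C - tprod p l B C"
  unfolding tprod_def by (simp add: fun_eq_iff sum_subtractf left_diff_distrib)

lemma tprod_diff_right:
  fixes A B C :: "'a::comm_ring tensor"
  shows "tprod p l A (B - C) = tprod p l A B - tprod p l A C"
  unfolding tprod_def by (simp add: fun_eq_iff sum_subtractf right_diff_distrib)

lemma tprod_uminus_left:
  fixes A C :: "'a::comm_ring tensor"
  shows "tprod p l (- A) C = - tprod p l A C"
  unfolding tprod_def by (simp add: fun_eq_iff sum_negf)

lemma tprod_uminus_right:
  fixes A C :: "'a::comm_ring tensor"
  shows "tprod p l A (- C) = - tprod p l A C"
  unfolding tprod_def by (simp add: fun_eq_iff sum_negf)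

lemma tprod_zero_left: "tprod p l 0 C = 0"
  unfolding tprod_def by (simp add: fun_eq_iff)

lemma ttrans_diff:
  fixes A B :: "'a::group_add tensor"
  shows "ttrans l (A - B) = ttrans l A - ttrans l B"
  unfolding ttrans_def by (simp add: fun_eq_iff)

lemma tens_tprod: "tens n q l A \<Longrightarrow> tens q' m l B \<Longrightarrow> tens n m l (tprod p l A B)"
  unfolding tens_def tprod_def by simp

lemma tens_ttrans: "tens n p l A \<Longrightarrow> tens p n l (ttrans l A)"
  unfolding tens_def ttrans_def by simp

lemma tens_add:
  fixes A B :: "'a::monoid_add tensor"
  shows "tens n p l A \<Longrightarrow> tens n p l B \<Longrightarrow> tens n p l (A + B)"
  unfolding tens_def by simp

lemma tens_diff:
  fixes A B :: "'a::group_add tensor"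
  shows "tens n p l A \<Longrightarrow> tens n p l B \<Longrightarrow> tens n p l (A - B)"
  unfolding tens_def by simp

section \<open>Slicewise linear algebra in the Fourier domain\<close>

lemma column_in_colspace:
  assumes "j < m"
  shows "(\<lambda>i. if i < n then M i j else 0) \<in> colspace n m M"
  unfolding colspace_def
  by (rule CollectI, rule exI[of _ "\<lambda>q. if q = j then 1 else 0"])
    (use assms in \<open>simp add: if_distrib cong: if_cong\<close>)

lemma orth_compl_colspace_iff:
  "v \<in> orth_compl n (colspace n m M) \<longleftrightarrow>
    (\<forall>i\<ge>n. v i = 0) \<and> (\<forall>j<m. (\<Sum>i<n. cnj (M i j) * v i) = 0)"
proof
  assume v: "v \<in> orth_compl n (colspace n m M)"
  have "(\<Sum>i<n. cnj (M i j) * v i) = 0" if "j < m" for j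
  proof -
    have "\<forall>u\<in>colspace n m M. (\<Sum>i<n. cnj (u i) * v i) = 0"
      using v unfolding orth_compl_def by blast
    from bspec[OF this column_in_colspace[OF that]] show ?thesis
      by simp
  qed
  thus "(\<forall>i\<ge>n. v i = 0) \<and> (\<forall>j<m. (\<Sum>i<n. cnj (M i j) * v i) = 0)"
    using v unfolding orth_compl_def by blast
next
  assume v: "(\<forall>i\<ge>n. v i = 0) \<and> (\<forall>j<m. (\<Sum>i<n. cnj (M i j) * v i) = 0)"
  have "(\<Sum>i<n. cnj (u i) * v i) = 0" if u: "u \<in> colspace n m M" for u
  proof -
    obtain c where u: "u = (\<lambda>i. if i < n then \<Sum>j<m. M i j * c j else 0)"
      using u unfolding colspace_def by blast
    have "(\<Sum>i<n. cnj (u i) * v i) = (\<Sum>j<m. cnj (c j) * (\<Sum>i<n. cnj (M i j) * v i))"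
      unfolding u by (simp add: sum_distrib_left sum_distrib_right mult_ac) (rule sum.swap)
    thus ?thesis
      using v by simp
  qed
  thus "v \<in> orth_compl n (colspace n m M)"
    using v unfolding orth_compl_def by blast
qed

lemma DFT_zero: "DFT l 0 = 0"
  unfolding DFT_def by (simp add: fun_eq_iff)

lemma tens_DFT: "tens n p l A \<Longrightarrow> tens n p l (DFT l A)"
  unfolding tens_def DFT_def by simp

lemma ttrans_tprod_eq_0_iff:
  assumes l: "1 \<le> l" and X: "tens n p l X" and U: "tens n m l U"
  shows "tprod n l (ttrans l X) U = 0 \<longleftrightarrow>
    (\<forall>k<l. \<forall>j<m. (\<lambda>i. DFT l U i j k) \<in> orth_compl n (colspace n p (\<lambda>i j. DFT l X i j k)))"
proof -
  have X': "tens n p l (DFT l X)" and U': "tens n m l (DFT l U)"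
    using X U by (simp_all add: tens_DFT)
  have outside: "(\<Sum>q<n. cnj (DFT l X q i k) * DFT l U q j k) = 0" if "\<not> (i < p \<and> j < m)" for i j k
    using that X' U' by (auto simp: tens_def not_less intro!: sum.neutral)
  have "tprod n l (ttrans l X) U = 0 \<longleftrightarrow> DFT l (tprod n l (ttrans l X) U) = DFT l 0"
    using DFT_inj[OF l vanishes_from_tprod] by (auto simp: vanishes_from_def)
  also have "\<dots> \<longleftrightarrow> (\<forall>k<l. \<forall>i j. (\<Sum>q<n. cnj (DFT l X q i k) * DFT l U q j k) = 0)"
    by (auto simp: fun_eq_iff DFT_tprod[OF l] DFT_ttrans[OF l] DFT_zero)
  also have "\<dots> \<longleftrightarrow> (\<forall>k<l. \<forall>j<m. \<forall>i<p. (\<Sum>q<n. cnj (DFT l X q i k) * DFT l U q j k) = 0)"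
    using outside by blast
  also have "\<dots> \<longleftrightarrow>
      (\<forall>k<l. \<forall>j<m. (\<lambda>i. DFT l U i j k) \<in> orth_compl n (colspace n p (\<lambda>i j. DFT l X i j k)))"
    using U' by (auto simp: orth_compl_colspace_iff tens_def)
  finally show ?thesis .
qed

lemma tens_iDFT: "tens n p l A \<Longrightarrow> tens n p l (iDFT l A)"
  unfolding tens_def iDFT_def by simp

lemma ex_tprod_eq_if_slicewise_colspace:
  fixes Y U :: "real tensor"
  assumes l: "1 \<le> l" and Y: "tens n m l Y" and U: "tens n p l U"
    and col: "\<forall>k<l. \<forall>j<p. (\<lambda>i. DFT l U i j k) \<in> colspace n m (\<lambda>i j. DFT l Y i j k)"
  shows "\<exists>B. tens m p l B \<and> tprod m l Y B = U"
proof -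
  have coeffs: "\<exists>c. \<forall>i. DFT l U i j k = (\<Sum>q<m. DFT l Y i q k * c q)" if jk: "k < l" "j < p" for j k
  proof -
    obtain c where c: "(\<lambda>i. DFT l U i j k) = (\<lambda>i. if i < n then \<Sum>q<m. DFT l Y i q k * c q else 0)"
      using col jk unfolding colspace_def by blast
    have "DFT l U i j k = (\<Sum>q<m. DFT l Y i q k * c q)" for i
    proof (cases "i < n")
      case True
      thus ?thesis using fun_cong[OF c, of i] by simp
    next
      case False
      thus ?thesis using tens_DFT[OF U] tens_DFT[OF Y] by (simp add: tens_def)
    qed
    thus ?thesis by blast
  qed
  define C where "C j k = (SOME c. \<forall>i. DFT l U i j k = (\<Sum>q<m. DFT l Y i q k * c q))" for j k
  have C: "DFT l U i j k = (\<Sum>q<m. DFT l Y i q k * C j k q)" if "k < l" "j < p" for i j k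
    using coeffs[OF that, THEN someI_ex] unfolding C_def by blast
  define Bh where "Bh = (\<lambda>q j k. if k < l \<and> j < p \<and> q < m then C j k q else 0)"
  have Bh: "tens m p l Bh"
    unfolding Bh_def tens_def by simp
  have U_Bh: "DFT l U i j k = (if k < l then \<Sum>q<m. DFT l Y i q k * Bh q j k else 0)" for i j k
  proof (cases "k < l \<and> j < p")
    case True
    thus ?thesis
      using C[of k j i] by (simp add: Bh_def)
  next
    case False
    thus ?thesis
      using tens_DFT[OF U] by (auto simp: Bh_def tens_def)
  qed
  define Bc where "Bc = iDFT l Bh"
  have YBc: "tprod m l (of_real_tens Y) Bc = of_real_tens U"
  proof (rule cDFT_inj[OF l vanishes_from_tprod vanishes_from_of_real_tens[OF tens_vanishes_from[OF U]]])
    show "cDFT l (tprod m l (of_real_tens Y) Bc) = cDFT l (of_real_tens U)"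
      using cDFT_iDFT[OF l tens_vanishes_from[OF Bh]]
      by (simp add: fun_eq_iff cDFT_tprod[OF l] Bc_def U_Bh flip: DFT_eq_cDFT)
  qed
  txt \<open>As \<open>Y\<close> and \<open>U\<close> are real, the real part of the complex solution \<open>Bc\<close> is again a solution.\<close>
  define B where "B = (\<lambda>i j k. Re (Bc i j k))"
  have "tprod m l Y B i j k = Re (tprod m l (of_real_tens Y) Bc i j k)" for i j k
    unfolding tprod_def B_def of_real_tens_def by simp
  hence "tprod m l Y B = U"
    unfolding YBc by (simp add: fun_eq_iff of_real_tens_def)
  moreover have "tens m p l B"
    using tens_iDFT[OF Bh] unfolding B_def Bc_def tens_def by simp
  ultimately show ?thesis
    by blast
qed

lemma ttrans_tprod_kernel_eq_range:
  fixes X Y :: "real tensor"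
  assumes l: "1 \<le> l" and X: "tens n p l X" and Y: "tens n m l Y"
    and compl: "\<forall>k<l. colspace n m (\<lambda>i j. DFT l Y i j k)
                  = orth_compl n (colspace n p (\<lambda>i j. DFT l X i j k))"
  shows "{U. tens n r l U \<and> tprod n l (ttrans l X) U = 0} = {tprod m l Y B | B. tens m r l B}"
proof (intro set_eqI iffI)
  fix U
  assume "U \<in> {U. tens n r l U \<and> tprod n l (ttrans l X) U = 0}"
  hence U: "tens n r l U" and XU: "tprod n l (ttrans l X) U = 0"
    by auto
  have "\<forall>k<l. \<forall>j<r. (\<lambda>i. DFT l U i j k) \<in> colspace n m (\<lambda>i j. DFT l Y i j k)"
    using XU compl unfolding ttrans_tprod_eq_0_iff[OF l X U] by simp
  thus "U \<in> {tprod m l Y B | B. tens m r l B}"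
    using ex_tprod_eq_if_slicewise_colspace[OF l Y U] by blast
next
  fix U
  assume "U \<in> {tprod m l Y B | B. tens m r l B}"
  then obtain B where B: "tens m r l B" and U: "U = tprod m l Y B"
    by blast
  have column: "(\<lambda>i. DFT l Y i j k) \<in> colspace n m (\<lambda>i j. DFT l Y i j k)" if "j < m" for j k
  proof -
    have "(\<lambda>i. DFT l Y i j k) = (\<lambda>i. if i < n then DFT l Y i j k else 0)"
      using tens_DFT[OF Y] by (auto simp: tens_def fun_eq_iff)
    thus ?thesis
      using column_in_colspace[OF that, of n "\<lambda>i j. DFT l Y i j k"] by simp
  qed
  have "(\<lambda>i. DFT l Y i j k) \<in> orth_compl n (colspace n p (\<lambda>i j. DFT l X i j k))"
    if "k < l" and "j < m" for j k
    using column[of j k, OF that(2)] compl that(1) by simp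
  hence "tprod n l (ttrans l X) Y = 0"
    unfolding ttrans_tprod_eq_0_iff[OF l X Y] by blast
  hence "tprod n l (ttrans l X) U = 0"
    unfolding U tprod_assoc[OF l, symmetric] by (simp add: tprod_zero_left)
  moreover have "tens n r l U"
    unfolding U by (rule tens_tprod[OF Y B])
  ultimately show "U \<in> {U. tens n r l U \<and> tprod n l (ttrans l X) U = 0}"
    by blast
qed

section \<open>Exponential generating functions\<close>

text \<open>\<open>egf a r\<close> is the \<open>r\<close>-th derivative of the exponential generating function of \<open>a\<close>.\<close>

definition egf :: "(nat \<Rightarrow> real) \<Rightarrow> nat \<Rightarrow> real \<Rightarrow> real" where
  "egf a r t = (\<Sum>m. a (m + r) / fact m * t ^ m)"

lemma summable_egf:
  fixes a :: "nat \<Rightarrow> real" and K C y :: real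
  assumes a: "\<And>m. \<bar>a m\<bar> \<le> K * C ^ m" and C: "0 \<le> C"
  shows "summable (\<lambda>m. a (m + r) / fact m * y ^ m)"
proof (rule summable_comparison_test[OF _ summable_mult[OF summable_exp[of "C * \<bar>y\<bar>"], of "K * C ^ r"]])
  have "norm (a (m + r) / fact m * y ^ m) \<le> K * C ^ r * (inverse (fact m) * (C * \<bar>y\<bar>) ^ m)" for m
  proof -
    have "norm (a (m + r) / fact m * y ^ m) = \<bar>a (m + r)\<bar> * (inverse (fact m) * \<bar>y\<bar> ^ m)"
      by (simp add: abs_mult power_abs divide_inverse)
    also have "\<dots> \<le> K * C ^ (m + r) * (inverse (fact m) * \<bar>y\<bar> ^ m)"
      by (rule mult_right_mono[OF a]) simp
    also have "\<dots> = K * C ^ r * (inverse (fact m) * (C * \<bar>y\<bar>) ^ m)"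
      by (simp add: power_add power_mult_distrib)
    finally show ?thesis .
  qed
  thus "\<exists>N. \<forall>m\<ge>N. norm (a (m + r) / fact m * y ^ m) \<le> K * C ^ r * (inverse (fact m) * (C * \<bar>y\<bar>) ^ m)"
    by blast
qed

lemma egf_has_derivative:
  assumes "\<And>m. \<bar>a m\<bar> \<le> K * C ^ m" and "0 \<le> C"
  shows "(egf a r has_real_derivative egf a (Suc r) t) (at t)"
proof -
  define c where "c m = a (m + r) / fact m" for m
  have "((\<lambda>x. \<Sum>m. c m * x ^ m) has_real_derivative (\<Sum>m. diffs c m * t ^ m)) (at t)"
    by (rule termdiffs_strong_converges_everywhere) (unfold c_def, rule summable_egf[OF assms])
  moreover have "diffs c m = a (m + Suc r) / fact m" for m
    unfolding diffs_def c_def by (simp add: field_simps del: of_nat_Suc)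
  ultimately show ?thesis
    unfolding egf_def c_def by simp
qed

lemma smooth_egf:
  assumes "\<And>m. \<bar>a m\<bar> \<le> K * C ^ m" and "0 \<le> C"
  shows "smooth_on_interval e (egf a 0)"
  unfolding smooth_on_interval_def
  by (rule exI[of _ "egf a"]) (simp add: egf_has_derivative[OF assms])

lemma egf_at_0: "egf a 0 0 = a 0"
  unfolding egf_def using powser_zero[of "\<lambda>m. a m / fact m"] by simp

section \<open>The curve \<open>t \<mapsto> exp (t A) * X\<close>\<close>

primrec tpow_tprod :: "nat \<Rightarrow> nat \<Rightarrow> real tensor \<Rightarrow> nat \<Rightarrow> real tensor \<Rightarrow> real tensor" where
  "tpow_tprod n l A 0 X = X"
| "tpow_tprod n l A (Suc m) X = tprod n l A (tpow_tprod n l A m X)"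

definition texp_tprod :: "nat \<Rightarrow> nat \<Rightarrow> real tensor \<Rightarrow> real tensor \<Rightarrow> real \<Rightarrow> real tensor" where
  "texp_tprod n l A X t = (\<lambda>i j k. egf (\<lambda>m. tpow_tprod n l A m X i j k) 0 t)"

lemma abs_tprod_le:
  assumes A: "\<And>i j k. \<bar>A i j k\<bar> \<le> M" and B: "\<And>i j k. \<bar>B i j k\<bar> \<le> K"
  shows "\<bar>tprod p l A B i j k\<bar> \<le> real l * real p * M * K"
proof -
  have "0 \<le> M"
    using A[of 0 0 0] by (meson abs_ge_zero order_trans)
  have "\<bar>tprod p l A B i j k\<bar> \<le> (\<Sum>s<l. \<Sum>q<p. \<bar>A i q ((k + l - s) mod l)\<bar> * \<bar>B q j s\<bar>)"
    unfolding tprod_def by (auto simp: abs_mult intro!: order_trans[OF sum_abs] sum_mono sum_nonneg)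
  also have "\<dots> \<le> (\<Sum>s<l. \<Sum>q<p. M * K)"
    using A B \<open>0 \<le> M\<close> by (intro sum_mono mult_mono) auto
  finally show ?thesis
    by (simp add: mult_ac)
qed

lemma abs_tpow_tprod_le:
  assumes "\<And>i j k. \<bar>A i j k\<bar> \<le> M" and "\<And>i j k. \<bar>X i j k\<bar> \<le> K"
  shows "\<bar>tpow_tprod n l A m X i j k\<bar> \<le> K * (real l * real n * M) ^ m"
proof (induction m arbitrary: i j k)
  case 0
  show ?case
    using assms(2) by simp
next
  case (Suc m)
  have "\<bar>tprod n l A (tpow_tprod n l A m X) i j k\<bar>
      \<le> real l * real n * M * (K * (real l * real n * M) ^ m)"
    by (rule abs_tprod_le[OF assms(1) Suc.IH])
  thus ?case
    by (simp add: mult_ac)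
qed

lemma tens_bounded:
  fixes A :: "real tensor"
  assumes "tens n p l A"
  shows "\<bar>A i j k\<bar> \<le> (\<Sum>i'<n. \<Sum>j'<p. \<Sum>k'<l. \<bar>A i' j' k'\<bar>)"
proof (cases "i < n \<and> j < p \<and> k < l")
  case True
  have "\<bar>A i j k\<bar> \<le> (\<Sum>k'<l. \<bar>A i j k'\<bar>)"
    using True by (intro member_le_sum[where f = "\<lambda>k'. \<bar>A i j k'\<bar>"]) auto
  also have "\<dots> \<le> (\<Sum>j'<p. \<Sum>k'<l. \<bar>A i j' k'\<bar>)"
    using True by (intro member_le_sum[where f = "\<lambda>j'. \<Sum>k'<l. \<bar>A i j' k'\<bar>"]) (auto intro: sum_nonneg)
  also have "\<dots> \<le> (\<Sum>i'<n. \<Sum>j'<p. \<Sum>k'<l. \<bar>A i' j' k'\<bar>)"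
    using True by (intro member_le_sum[where f = "\<lambda>i'. \<Sum>j'<p. \<Sum>k'<l. \<bar>A i' j' k'\<bar>"])
      (auto intro: sum_nonneg)
  finally show ?thesis .
next
  case False
  hence "A i j k = 0"
    using assms unfolding tens_def by auto
  thus ?thesis
    by (simp add: sum_nonneg)
qed

lemma tpow_tprod_growth:
  assumes "tens n n l A" and "tens n p l X"
  obtains K C where "0 \<le> C" and "\<And>m i j k. \<bar>tpow_tprod n l A m X i j k\<bar> \<le> K * C ^ m"
proof
  let ?M = "\<Sum>i'<n. \<Sum>j'<n. \<Sum>k'<l. \<bar>A i' j' k'\<bar>"
  show "0 \<le> real l * real n * ?M"
    by (simp add: sum_nonneg)
  show "\<bar>tpow_tprod n l A m X i j k\<bar> \<le> (\<Sum>i'<n. \<Sum>j'<p. \<Sum>k'<l. \<bar>X i' j' k'\<bar>) * (real l * real n * ?M) ^ m"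
    for m i j k
    by (rule abs_tpow_tprod_le) (use tens_bounded assms in blast)+
qed

lemma tens_tpow_tprod: "tens n n l A \<Longrightarrow> tens n p l X \<Longrightarrow> tens n p l (tpow_tprod n l A m X)"
  by (induction m) (auto intro: tens_tprod)

lemma tens_texp_tprod:
  assumes "tens n n l A" and "tens n p l X"
  shows "tens n p l (texp_tprod n l A X t)"
proof -
  have "tpow_tprod n l A m X i j k = 0" if "n \<le> i \<or> p \<le> j \<or> l \<le> k" for m i j k
    using tens_tpow_tprod[OF assms] that unfolding tens_def by blast
  thus ?thesis
    unfolding tens_def texp_tprod_def egf_def by simp
qed

lemma texp_tprod_at_0: "texp_tprod n l A X 0 = X"
  unfolding texp_tprod_def by (simp add: fun_eq_iff egf_at_0)

lemma smooth_texp_tprod: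
  assumes "tens n n l A" and "tens n p l X"
  shows "smooth_on_interval e (\<lambda>t. texp_tprod n l A X t i j k)"
proof -
  obtain K C where "0 \<le> C" and "\<And>m. \<bar>tpow_tprod n l A m X i j k\<bar> \<le> K * C ^ m"
    using tpow_tprod_growth[OF assms] by metis
  thus ?thesis
    unfolding texp_tprod_def by (intro smooth_egf)
qed

lemma texp_tprod_has_derivative:
  assumes "tens n n l A" and "tens n p l X"
  shows "((\<lambda>t. texp_tprod n l A X t i j k) has_real_derivative
    tprod n l A (texp_tprod n l A X t) i j k) (at t)"
proof -
  obtain K C where C: "0 \<le> C" and growth: "\<And>m i j k. \<bar>tpow_tprod n l A m X i j k\<bar> \<le> K * C ^ m"
    using tpow_tprod_growth[OF assms] by metis
  have summable: "summable (\<lambda>m. tpow_tprod n l A m X q j s / fact m * t ^ m)" for q s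
    using summable_egf[OF growth C, where r = 0] by simp
  have "egf (\<lambda>m. tpow_tprod n l A m X i j k) 1 t = tprod n l A (texp_tprod n l A X t) i j k"
  proof (cases "k < l")
    case True
    have "egf (\<lambda>m. tpow_tprod n l A m X i j k) 1 t
        = (\<Sum>m. \<Sum>s<l. \<Sum>q<n. A i q ((k + l - s) mod l) * (tpow_tprod n l A m X q j s / fact m * t ^ m))"
      unfolding egf_def using True
      by (simp add: tprod_def sum_distrib_left sum_distrib_right sum_divide_distrib mult_ac)
    also have "\<dots> = (\<Sum>s<l. \<Sum>q<n. \<Sum>m. A i q ((k + l - s) mod l) * (tpow_tprod n l A m X q j s / fact m * t ^ m))"
      by (subst suminf_sum, (intro summable_sum summable_mult summable)?,
          subst suminf_sum, (intro summable_mult summable)?, rule refl)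
    also have "\<dots> = (\<Sum>s<l. \<Sum>q<n. A i q ((k + l - s) mod l) * (\<Sum>m. tpow_tprod n l A m X q j s / fact m * t ^ m))"
      by (intro sum.cong refl) (rule suminf_mult[OF summable])
    also have "\<dots> = tprod n l A (texp_tprod n l A X t) i j k"
      unfolding tprod_def texp_tprod_def egf_def using True by simp
    finally show ?thesis .
  qed (simp add: egf_def tprod_def)
  with egf_has_derivative[where a = "\<lambda>m. tpow_tprod n l A m X i j k", OF growth C, of 0 t]
  show ?thesis
    unfolding texp_tprod_def by simp
qed

lemma tprod_has_derivative:
  assumes "\<And>i j k. ((\<lambda>t. G t i j k) has_real_derivative G' i j k) (at x)"
    and "\<And>i j k. ((\<lambda>t. H t i j k) has_real_derivative H' i j k) (at x)"
  shows "((\<lambda>t. tprod p l (G t) (H t) i j k) has_real_derivative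
    (tprod p l G' (H x) + tprod p l (G x) H') i j k) (at x)"
proof (cases "k < l")
  case True
  have "((\<lambda>t. \<Sum>s<l. \<Sum>q<p. G t i q ((k + l - s) mod l) * H t q j s) has_real_derivative
      (\<Sum>s<l. \<Sum>q<p. G' i q ((k + l - s) mod l) * H x q j s + H' q j s * G x i q ((k + l - s) mod l))) (at x)"
    by (intro DERIV_sum DERIV_mult assms)
  thus ?thesis
    using True unfolding tprod_def by (simp add: sum.distrib mult.commute)
qed (simp add: tprod_def)

lemma ttrans_has_derivative:
  assumes "\<And>i j k. ((\<lambda>t. G t i j k) has_real_derivative G' i j k) (at x)"
  shows "((\<lambda>t. ttrans l (G t) i j k) has_real_derivative ttrans l G' i j k) (at x)"
  unfolding ttrans_def by (cases "k < l") (simp_all add: assms)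

lemma has_real_derivative_locally_const_eq_0:
  fixes f :: "real \<Rightarrow> real"
  assumes "0 < e" and "\<forall>t\<in>{-e<..<e}. f t = c" and "(f has_real_derivative d) (at 0)"
  shows "d = 0"
proof -
  have "(f has_real_derivative 0) (at 0)"
    by (rule has_field_derivative_transform_within_open[of "\<lambda>t. c" _ _ "{-e<..<e}"])
      (use assms in auto)
  thus ?thesis
    using assms(3) DERIV_unique by blast
qed

section \<open>The tangent space of the Stiefel manifold\<close>

lemma skew_tensor_iff: "skew_tensor p l W \<longleftrightarrow> tens p p l W \<and> ttrans l W = - W"
  unfolding skew_tensor_def by (simp add: fun_eq_iff)

lemma StiefelD:
  assumes "X \<in> Stiefel n p l"
  shows "tens n p l X" and "tprod n l (ttrans l X) X = tident p"
  using assms unfolding Stiefel_def by auto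

lemma texp_tprod_in_Stiefel:
  assumes l: "1 \<le> l" and A: "tens n n l A" "ttrans l A = - A" and X: "X \<in> Stiefel n p l"
  shows "texp_tprod n l A X t \<in> Stiefel n p l"
proof -
  define \<gamma> where "\<gamma> = texp_tprod n l A X"
  have d\<gamma>: "((\<lambda>t. \<gamma> t i j k) has_real_derivative tprod n l A (\<gamma> t) i j k) (at t)" for t i j k
    unfolding \<gamma>_def by (rule texp_tprod_has_derivative[OF A(1) StiefelD(1)[OF X]])
  have "((\<lambda>t. tprod n l (ttrans l (\<gamma> t)) (\<gamma> t) i j k) has_real_derivative 0) (at x)" for x i j k
  proof -
    have "tprod n l (ttrans l (tprod n l A (\<gamma> x))) (\<gamma> x) = - tprod n l (ttrans l (\<gamma> x)) (tprod n l A (\<gamma> x))"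
      by (simp add: ttrans_tprod[OF l] A(2) tprod_assoc[OF l] tprod_uminus_left tprod_uminus_right)
    moreover have "((\<lambda>t. tprod n l (ttrans l (\<gamma> t)) (\<gamma> t) i j k) has_real_derivative
        (tprod n l (ttrans l (tprod n l A (\<gamma> x))) (\<gamma> x)
          + tprod n l (ttrans l (\<gamma> x)) (tprod n l A (\<gamma> x))) i j k) (at x)"
      by (rule tprod_has_derivative[OF ttrans_has_derivative[OF d\<gamma>] d\<gamma>])
    ultimately show ?thesis
      by simp
  qed
  hence "tprod n l (ttrans l (\<gamma> t)) (\<gamma> t) i j k = tprod n l (ttrans l (\<gamma> 0)) (\<gamma> 0) i j k" for i j k
    by (intro DERIV_isconst_all) blast
  hence "tprod n l (ttrans l (\<gamma> t)) (\<gamma> t) = tident p"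
    using StiefelD(2)[OF X] by (simp add: fun_eq_iff \<gamma>_def texp_tprod_at_0)
  thus ?thesis
    unfolding Stiefel_def \<gamma>_def using tens_texp_tprod[OF A(1) StiefelD(1)[OF X]] by simp
qed

lemma tprod_in_tangent_space_Stiefel:
  assumes l: "1 \<le> l" and A: "tens n n l A" "ttrans l A = - A" and X: "X \<in> Stiefel n p l"
  shows "tprod n l A X \<in> tangent_space (Stiefel n p l) X"
  unfolding tangent_space_def
proof (intro CollectI exI[of _ "texp_tprod n l A X"] exI[of _ "1::real"] conjI ballI allI)
  show "texp_tprod n l A X t \<in> Stiefel n p l" for t
    by (rule texp_tprod_in_Stiefel[OF l A X])
  show "smooth_on_interval 1 (\<lambda>t. texp_tprod n l A X t i j k)" for i j k
    by (rule smooth_texp_tprod[OF A(1) StiefelD(1)[OF X]])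
  show "((\<lambda>t. texp_tprod n l A X t i j k) has_real_derivative tprod n l A X i j k) (at 0)" for i j k
    using texp_tprod_has_derivative[OF A(1) StiefelD(1)[OF X], of i j k 0]
    by (simp add: texp_tprod_at_0)
qed (simp_all add: texp_tprod_at_0)

lemma tangent_space_StiefelD:
  assumes "V \<in> tangent_space (Stiefel n p l) X"
  shows "tens n p l V" and "tprod n l (ttrans l V) X + tprod n l (ttrans l X) V = 0"
proof -
  obtain \<gamma> e where e: "e > 0" and \<gamma>0: "\<gamma> 0 = X" and \<gamma>: "\<forall>t\<in>{-e<..<e}. \<gamma> t \<in> Stiefel n p l"
    and d\<gamma>: "\<And>i j k. ((\<lambda>t. \<gamma> t i j k) has_real_derivative V i j k) (at 0)"
    using assms unfolding tangent_space_def by blast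
  have "V i j k = 0" if "n \<le> i \<or> p \<le> j \<or> l \<le> k" for i j k
  proof (rule has_real_derivative_locally_const_eq_0[OF e _ d\<gamma>])
    show "\<forall>t\<in>{-e<..<e}. \<gamma> t i j k = 0"
      using \<gamma> that unfolding Stiefel_def tens_def by auto
  qed
  thus "tens n p l V"
    unfolding tens_def by blast
  have "(tprod n l (ttrans l V) X + tprod n l (ttrans l X) V) i j k = 0" for i j k
  proof (rule has_real_derivative_locally_const_eq_0[OF e])
    show "\<forall>t\<in>{-e<..<e}. tprod n l (ttrans l (\<gamma> t)) (\<gamma> t) i j k = tident p i j k"
      using \<gamma> unfolding Stiefel_def by auto
    show "((\<lambda>t. tprod n l (ttrans l (\<gamma> t)) (\<gamma> t) i j k) has_real_derivative
        (tprod n l (ttrans l V) X + tprod n l (ttrans l X) V) i j k) (at 0)"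
      using tprod_has_derivative[OF ttrans_has_derivative[OF d\<gamma>] d\<gamma>] unfolding \<gamma>0 .
  qed
  thus "tprod n l (ttrans l V) X + tprod n l (ttrans l X) V = 0"
    by (simp add: fun_eq_iff)
qed

text \<open>If \<open>W = X\<^sup>T * V\<close> is skew, then \<open>V = A * X\<close> for the skew tensor
  \<open>A = V * X\<^sup>T - X * V\<^sup>T - X * W * X\<^sup>T\<close>.\<close>

lemma skew_generator_Stiefel:
  assumes l: "1 \<le> l" and X: "X \<in> Stiefel n p l" and V: "tens n p l V"
    and skew: "skew_tensor p l (tprod n l (ttrans l X) V)"
  obtains A where "tens n n l A" and "ttrans l A = - A" and "tprod n l A X = V"
proof
  note X' = StiefelD[OF X]
  define W where "W = tprod n l (ttrans l X) V"
  have Wt: "tens p p l W" and Wskew: "ttrans l W = - W"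
    using skew unfolding W_def skew_tensor_iff by auto
  have VX: "tprod n l (ttrans l V) X = - W"
    using Wskew unfolding W_def ttrans_tprod[OF l] ttrans_ttrans[OF tens_vanishes_from[OF X'(1)]] .
  define A where "A = tprod p l V (ttrans l X) - tprod p l X (ttrans l V)
    - tprod p l X (tprod p l W (ttrans l X))"
  show "tens n n l A"
    unfolding A_def
    by (intro tens_diff tens_tprod[OF V tens_ttrans[OF X'(1)]] tens_tprod[OF X'(1) tens_ttrans[OF V]]
        tens_tprod[OF X'(1) tens_tprod[OF Wt tens_ttrans[OF X'(1)]]])
  show "ttrans l A = - A"
    unfolding A_def
    by (simp add: ttrans_diff ttrans_tprod[OF l] ttrans_ttrans[OF tens_vanishes_from[OF X'(1)]]
        ttrans_ttrans[OF tens_vanishes_from[OF V]] Wskew tprod_uminus_left tprod_uminus_right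
        tprod_assoc[OF l])
  show "tprod n l A X = V"
    unfolding A_def
    by (simp add: tprod_diff_left tprod_assoc[OF l] X'(2) VX tprod_uminus_right
        tprod_tident_right[OF l V] tprod_tident_right[OF l Wt])
qed

lemma tangent_space_Stiefel:
  assumes l: "1 \<le> l" and X: "X \<in> Stiefel n p l"
  shows "tangent_space (Stiefel n p l) X
    = {V. tens n p l V \<and> skew_tensor p l (tprod n l (ttrans l X) V)}"
proof (intro set_eqI iffI CollectI conjI)
  fix V
  assume V: "V \<in> tangent_space (Stiefel n p l) X"
  show "tens n p l V"
    by (rule tangent_space_StiefelD(1)[OF V])
  have "ttrans l (tprod n l (ttrans l X) V) = tprod n l (ttrans l V) X"
    by (simp add: ttrans_tprod[OF l] ttrans_ttrans[OF tens_vanishes_from[OF StiefelD(1)[OF X]]])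
  also have "\<dots> = - tprod n l (ttrans l X) V"
    using tangent_space_StiefelD(2)[OF V] by (simp add: eq_neg_iff_add_eq_0)
  finally show "skew_tensor p l (tprod n l (ttrans l X) V)"
    unfolding skew_tensor_iff
    using tens_tprod[OF tens_ttrans[OF StiefelD(1)[OF X]] tangent_space_StiefelD(1)[OF V]] by blast
next
  fix V
  assume "V \<in> {V. tens n p l V \<and> skew_tensor p l (tprod n l (ttrans l X) V)}"
  then obtain A where "tens n n l A" "ttrans l A = - A" "tprod n l A X = V"
    using skew_generator_Stiefel[OF l X] by blast
  thus "V \<in> tangent_space (Stiefel n p l) X"
    using tprod_in_tangent_space_Stiefel[OF l _ _ X] by blast
qed

lemma Stiefel_tprod_cancel:
  assumes l: "1 \<le> l" and X: "X \<in> Stiefel n p l" and W: "tens p m l W"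
  shows "tprod n l (ttrans l X) (tprod p l X W) = W"
  by (simp add: tprod_assoc[OF l, symmetric] StiefelD(2)[OF X] tprod_tident_left[OF l W])

lemma Stiefel_tangent_decomposition:
  assumes l: "1 \<le> l" and X: "X \<in> Stiefel n p l"
  shows "{V. tens n p l V \<and> skew_tensor p l (tprod n l (ttrans l X) V)}
    = {tprod p l X W + U | W U. skew_tensor p l W \<and> tens n p l U \<and> tprod n l (ttrans l X) U = 0}"
proof (intro set_eqI iffI)
  fix V
  assume "V \<in> {V. tens n p l V \<and> skew_tensor p l (tprod n l (ttrans l X) V)}"
  hence V: "tens n p l V" and skew: "skew_tensor p l (tprod n l (ttrans l X) V)"
    by auto
  define W where "W = tprod n l (ttrans l X) V"
  have Wt: "tens p p l W"
    using skew unfolding W_def skew_tensor_iff by blast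
  have "tprod n l (ttrans l X) (V - tprod p l X W) = 0"
    by (simp add: tprod_diff_right Stiefel_tprod_cancel[OF l X Wt] W_def[symmetric])
  moreover have "tens n p l (V - tprod p l X W)"
    by (intro tens_diff V tens_tprod[OF StiefelD(1)[OF X] Wt])
  moreover have "V = tprod p l X W + (V - tprod p l X W)"
    by simp
  moreover have "skew_tensor p l W"
    using skew unfolding W_def .
  ultimately show "V \<in> {tprod p l X W + U | W U. skew_tensor p l W \<and> tens n p l U \<and> tprod n l (ttrans l X) U = 0}"
    by blast
next
  fix V
  assume "V \<in> {tprod p l X W + U | W U. skew_tensor p l W \<and> tens n p l U \<and> tprod n l (ttrans l X) U = 0}"
  then obtain W U where V: "V = tprod p l X W + U" and skew: "skew_tensor p l W"
    and U: "tens n p l U" "tprod n l (ttrans l X) U = 0"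
    by blast
  have Wt: "tens p p l W"
    using skew unfolding skew_tensor_iff by blast
  have "tprod n l (ttrans l X) V = W"
    by (simp add: V tprod_add_right Stiefel_tprod_cancel[OF l X Wt] U(2))
  moreover have "tens n p l V"
    unfolding V by (intro tens_add U(1) tens_tprod[OF StiefelD(1)[OF X] Wt])
  ultimately show "V \<in> {V. tens n p l V \<and> skew_tensor p l (tprod n l (ttrans l X) V)}"
    using skew by simp
qed

lemma DFT_Re_iDFT:
  assumes l: "1 \<le> l" and "vanishes_from l A" and "\<forall>i j k. Im (iDFT l A i j k) = 0"
  shows "DFT l (\<lambda>i j k. Re (iDFT l A i j k)) = A"
proof -
  have "of_real_tens (\<lambda>i j k. Re (iDFT l A i j k)) = iDFT l A"
    using assms(3) by (simp add: of_real_tens_def fun_eq_iff complex_eq_iff)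
  thus ?thesis
    unfolding DFT_eq_cDFT using cDFT_iDFT[OF assms(1,2)] by simp
qed

lemma tens_Re_iDFT: "tens n m l A \<Longrightarrow> tens n m l (\<lambda>i j k. Re (iDFT l A i j k))"
  unfolding tens_def iDFT_def by simp

lemma tadd_eq_plus: "tadd A B = A + B"
  unfolding tadd_def by (simp add: fun_eq_iff)

theorem mainTheorem2:
  fixes n p l :: nat and X :: "real tensor" and Xhat_perp :: "complex tensor"
  assumes "p \<le> n" and "1 \<le> l"
    and "X \<in> Stiefel n p l"
    and "tens n (n - p) l Xhat_perp"
    and "\<forall>k<l. colspace n (n - p) (\<lambda>i j. Xhat_perp i j k)
                = orth_compl n (colspace n p (\<lambda>i j. DFT l X i j k))"
    and "\<forall>i j k. Im (iDFT l Xhat_perp i j k) = 0"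
  shows "tangent_space (Stiefel n p l) X =
    {tadd (tprod p l X W) (tprod (n - p) l (\<lambda>i j k. Re (iDFT l Xhat_perp i j k)) B) | W B.
        skew_tensor p l W \<and> tens (n - p) p l B}"
proof -
  note l = assms(2) and X = assms(3)
  define X_perp where "X_perp = (\<lambda>i j k. Re (iDFT l Xhat_perp i j k))"
  have "DFT l X_perp = Xhat_perp"
    unfolding X_perp_def by (rule DFT_Re_iDFT[OF l tens_vanishes_from[OF assms(4)] assms(6)])
  hence "{U. tens n p l U \<and> tprod n l (ttrans l X) U = 0} = {tprod (n - p) l X_perp B | B. tens (n - p) p l B}"
    using ttrans_tprod_kernel_eq_range[OF l StiefelD(1)[OF X]] tens_Re_iDFT[OF assms(4)] assms(5)
    unfolding X_perp_def by simp
  hence kernel: "tens n p l U \<and> tprod n l (ttrans l X) U = 0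
      \<longleftrightarrow> (\<exists>B. U = tprod (n - p) l X_perp B \<and> tens (n - p) p l B)" for U
    by blast
  have "{tprod p l X W + U | W U. skew_tensor p l W \<and> tens n p l U \<and> tprod n l (ttrans l X) U = 0}
      = {tprod p l X W + tprod (n - p) l X_perp B | W B. skew_tensor p l W \<and> tens (n - p) p l B}"
    by (auto simp: kernel)
  thus ?thesis
    unfolding tangent_space_Stiefel[OF l X] Stiefel_tangent_decomposition[OF l X] tadd_eq_plus
      X_perp_def[symmetric] .
qed

end
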